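(* Let $\alpha$ be an action of a discrete group $G$ on a non-compact locally compact Hausdorff space $X$ with more than two points, such that for every compact $K\subseteq X$ and every nonempty open $U\subseteq X$ there exists $g\in G$ with $\alpha_g(K)\subseteq U$. Then the induced action $\sigma_g(f)=f\circ\alpha_g^{-1}$ on $C_0(X)$ is $G$-separating.
   Context: $\sigma$ is $G$-separating if for all $a,b\in C_0(X)_+$, $c\in C_0(X)$, $\varepsilon>0$ there exist $s,t\in C_0(X)$, $g,h\in G$ with $\|s^*as-\sigma_g(a)\|<\varepsilon$, $\|t^*bt-\sigma_h(b)\|<\varepsilon$, $\|s^*ct\|<\varepsilon$. *)

theory Defs
  imports "HOL-Analysis.Analysis"
begin

definition C0 :: "('a::topological_space \<Rightarrow> complex) set" where
  "C0 = {f. continuous_on UNIV f \<and>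
            (\<forall>e>0. \<exists>K. compact K \<and> (\<forall>x. x \<notin> K \<longrightarrow> norm (f x) < e))}"

definition C0_pos :: "('a::topological_space \<Rightarrow> complex) set" where
  "C0_pos = {f \<in> C0. \<forall>x. Im (f x) = 0 \<and> 0 \<le> Re (f x)}"

definition supnorm :: "('a \<Rightarrow> complex) \<Rightarrow> real" where
  "supnorm f = (SUP x. norm (f x))"

text \<open>The product s^* a t in the commutative C*-algebra C_0(X).\<close>
definition sandw :: "('a \<Rightarrow> complex) \<Rightarrow> ('a \<Rightarrow> complex) \<Rightarrow> ('a \<Rightarrow> complex) \<Rightarrow> ('a \<Rightarrow> complex)" where
  "sandw s a t = (\<lambda>x. cnj (s x) * a x * t x)"

text \<open>Action of a group (written additively, not necessarily abelian) on a space by homeomorphisms.\<close>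
definition group_action_homeo :: "('g::group_add \<Rightarrow> 'a::topological_space \<Rightarrow> 'a) \<Rightarrow> bool" where
  "group_action_homeo \<alpha> \<longleftrightarrow> \<alpha> 0 = id \<and> (\<forall>g h. \<alpha> (g + h) = \<alpha> g \<circ> \<alpha> h)
      \<and> (\<forall>g. continuous_on UNIV (\<alpha> g))"

definition induced_action :: "('g::group_add \<Rightarrow> 'a \<Rightarrow> 'a) \<Rightarrow> 'g \<Rightarrow> ('a \<Rightarrow> complex) \<Rightarrow> ('a \<Rightarrow> complex)" where
  "induced_action \<alpha> g f = f \<circ> \<alpha> (- g)"

definition G_separating :: "('g \<Rightarrow> ('a::topological_space \<Rightarrow> complex) \<Rightarrow> ('a \<Rightarrow> complex)) \<Rightarrow> bool" where
  "G_separating \<sigma> \<longleftrightarrow>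
     (\<forall>a\<in>C0_pos. \<forall>b\<in>C0_pos. \<forall>c\<in>C0. \<forall>\<epsilon>>0.
        \<exists>s\<in>C0. \<exists>t\<in>C0. \<exists>g h.
          supnorm (\<lambda>x. sandw s a s x - \<sigma> g a x) < \<epsilon> \<and>
          supnorm (\<lambda>x. sandw t b t x - \<sigma> h b x) < \<epsilon> \<and>
          supnorm (sandw s c t) < \<epsilon>)"

end

theory Submission imports Defs begin

text \<open>For positive a, choose a point where a > 0 and a neighbourhood U of it on which a is
  bounded below. Minimality moves the compact set where a \<ge> \<delta> into U by some \<alpha> g, so
  a \<circ> \<alpha> (-g) is, up to \<delta>, supported in U, and there it equals |s|^2 a for some s supported
  in U. Every nonempty open set contains two points (move any two points into it), so the
  neighbourhoods used for a and for b can be chosen disjoint, and then s^* c t = 0.\<close>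

lemma supnorm_le:
  assumes "\<And>x. norm (f x) \<le> B"
  shows "supnorm f \<le> B"
  unfolding supnorm_def by (rule cSUP_least) (use assms in auto)

lemma sandw_self: "sandw s a s x = of_real ((norm (s x))\<^sup>2) * a x"
  unfolding sandw_def complex_norm_square by (simp add: mult_ac)

lemma C0_pos_real:
  assumes "a \<in> C0_pos"
  shows "a x = of_real (Re (a x))" "0 \<le> Re (a x)"
  using assms unfolding C0_pos_def by (auto simp: complex_eq_iff)

lemma C0_pos_continuous_Re:
  assumes "a \<in> C0_pos"
  shows "continuous_on UNIV (\<lambda>x. Re (a x))"
  using assms unfolding C0_pos_def C0_def by (intro continuous_on_Re) blast

lemma C0_superlevel_compact:
  assumes "f \<in> C0" and "\<delta> > 0"
  shows "compact {x. \<delta> \<le> norm (f x)}"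
proof -
  obtain K where K: "compact K" "\<And>x. x \<notin> K \<Longrightarrow> norm (f x) < \<delta>"
    using assms unfolding C0_def by blast
  have "continuous_on UNIV f" using assms(1) unfolding C0_def by blast
  then have "closed {x. \<delta> \<le> norm (f x)}"
    by (intro closed_Collect_le continuous_intros)
  moreover have "{x. \<delta> \<le> norm (f x)} = K \<inter> {x. \<delta> \<le> norm (f x)}"
    using K(2) by force
  ultimately show ?thesis using K(1) by (metis compact_Int_closed)
qed

lemma C0_pos_positive_set:
  assumes "a \<in> C0_pos"
  obtains W where "open W" "W \<noteq> {}" "(\<forall>x. a x = 0) \<or> (\<forall>p\<in>W. 0 < Re (a p))"
proof (cases "\<forall>x. a x = 0")
  case True
  then show ?thesis using that[of UNIV] by auto
next
  case False
  then obtain p where "a p \<noteq> 0" by blast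
  then have "0 < Re (a p)" using C0_pos_real[OF assms, of p] by (metis less_eq_real_def of_real_0)
  moreover have "open {x. 0 < Re (a x)}"
    by (intro open_Collect_less continuous_intros C0_pos_continuous_Re[OF assms])
  ultimately show ?thesis using that[of "{x. 0 < Re (a x)}"] by auto
qed

lemma group_action_homeo_inverse:
  assumes "group_action_homeo \<alpha>"
  shows "\<alpha> g (\<alpha> (- g) x) = x" "\<alpha> (- g) (\<alpha> g x) = x"
  using assms unfolding group_action_homeo_def
  by (metis comp_apply id_apply right_minus, metis comp_apply id_apply left_minus)

lemma exists_sandwich_approximation:
  fixes A A' :: "'a::topological_space \<Rightarrow> real"
  assumes cA: "continuous_on UNIV A" and cA': "continuous_on UNIV A'"
    and A'_nonneg: "\<And>x. 0 \<le> A' x"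
    and \<delta>: "\<delta> > 0" and \<eta>: "\<eta> > 0"
    and C: "compact C" "{x. \<delta> \<le> A' x} \<subseteq> C" "\<And>x. x \<in> C \<Longrightarrow> \<eta> < A x"
  shows "\<exists>s\<in>C0. (\<forall>x. s x \<noteq> 0 \<longrightarrow> x \<in> C)
                \<and> (\<forall>x. \<bar>(norm (s x))\<^sup>2 * A x - A' x\<bar> \<le> 2 * \<delta>)"
proof -
  define r where "r x = min 1 (max 0 ((A' x - \<delta>) / \<delta>))" for x
  define s where "s x = complex_of_real (sqrt (r x * A' x / max (A x) \<eta>))" for x
  txt \<open>The factor r cuts A' off below the level \<delta>, so s is supported in C; the denominator
    max (A x) \<eta> equals A x wherever s does not vanish, and keeps s continuous elsewhere.\<close>
  have r01: "0 \<le> r x" "r x \<le> 1" for x unfolding r_def by auto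
  have r_supp: "x \<in> C" if "r x \<noteq> 0" for x
  proof -
    have "0 < (A' x - \<delta>) / \<delta>" using that r01[of x] unfolding r_def by linarith
    then have "\<delta> \<le> A' x" using \<delta> by (simp add: zero_less_divide_iff)
    then show ?thesis using C(2) by blast
  qed
  have s_supp: "\<forall>x. s x \<noteq> 0 \<longrightarrow> x \<in> C"
    using r_supp unfolding s_def by (metis mult_zero_left div_0 real_sqrt_zero of_real_0)
  have "continuous_on UNIV s"
    unfolding s_def r_def using \<delta> \<eta> by (intro continuous_intros cA cA') auto
  moreover have "\<exists>K. compact K \<and> (\<forall>x. x \<notin> K \<longrightarrow> norm (s x) < e)" if "e > 0" for e
    using C(1) s_supp that by (intro exI[of _ C]) (metis norm_zero)
  ultimately have "s \<in> C0" unfolding C0_def by blast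
  moreover have "\<bar>(norm (s x))\<^sup>2 * A x - A' x\<bar> \<le> 2 * \<delta>" for x
  proof -
    have "(norm (s x))\<^sup>2 * A x = r x * A' x"
    proof (cases "r x = 0")
      case False
      then have "\<eta> < A x" using r_supp C(3) by blast
      moreover have "0 \<le> r x * A' x" using r01[of x] A'_nonneg[of x] by simp
      ultimately have "(norm (s x))\<^sup>2 = r x * A' x / A x"
        unfolding s_def using \<eta> by (simp add: max_absorb1)
      then show ?thesis using \<open>\<eta> < A x\<close> \<eta> by simp
    qed (simp add: s_def)
    moreover have "\<bar>r x * A' x - A' x\<bar> \<le> 2 * \<delta>"
    proof (cases "2 * \<delta> \<le> A' x")
      case True
      then have "r x = 1" unfolding r_def using \<delta> by (auto simp: field_simps)
      then show ?thesis using \<delta> by simp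
    next
      case False
      have "0 \<le> (1 - r x) * A' x" using r01[of x] A'_nonneg[of x] by simp
      then have "\<bar>r x * A' x - A' x\<bar> = (1 - r x) * A' x" by (simp add: algebra_simps)
      also have "\<dots> \<le> A' x" using r01[of x] A'_nonneg[of x] by (simp add: mult_left_le_one_le)
      finally show ?thesis using False by simp
    qed
    ultimately show ?thesis by simp
  qed
  ultimately show ?thesis using s_supp by blast
qed

lemma exists_compression_pos:
  fixes \<alpha> :: "'g::group_add \<Rightarrow> 'a::topological_space \<Rightarrow> 'a"
  assumes act: "group_action_homeo \<alpha>"
    and minimal: "\<And>K U. compact K \<Longrightarrow> open U \<Longrightarrow> U \<noteq> {} \<Longrightarrow> \<exists>g. \<alpha> g ` K \<subseteq> U"
    and a: "a \<in> C0_pos" and \<epsilon>: "\<epsilon> > 0"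
    and V: "open V" "p \<in> V" and p: "0 < Re (a p)"
  shows "\<exists>s\<in>C0. \<exists>g. supnorm (\<lambda>x. sandw s a s x - induced_action \<alpha> g a x) < \<epsilon>
                   \<and> (\<forall>x. s x \<noteq> 0 \<longrightarrow> x \<in> V)"
proof -
  define A where "A x = Re (a x)" for x
  have cA: "continuous_on UNIV A" unfolding A_def by (rule C0_pos_continuous_Re[OF a])
  have a_eq: "a x = of_real (A x)" and A_nonneg: "0 \<le> A x" for x
    unfolding A_def using C0_pos_real[OF a] by auto
  define \<eta> where "\<eta> = A p / 2"
  define \<delta> where "\<delta> = \<epsilon> / 4"
  have \<eta>: "\<eta> > 0" and \<delta>: "\<delta> > 0" using p \<epsilon> by (simp_all add: \<eta>_def \<delta>_def A_def)
  define U where "U = V \<inter> {x. \<eta> < A x}"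
  have "open U" unfolding U_def using V(1) by (intro open_Int open_Collect_less cA continuous_intros)
  moreover have "p \<in> U" using V(2) \<eta> unfolding U_def \<eta>_def by auto
  moreover have "compact {x. \<delta> \<le> A x}"
    using C0_superlevel_compact[OF _ \<delta>, of a] a a_eq A_nonneg unfolding C0_pos_def by simp
  ultimately obtain g where g: "\<alpha> g ` {x. \<delta> \<le> A x} \<subseteq> U" using minimal by blast
  define C where "C = \<alpha> g ` {x. \<delta> \<le> A x}"
  define A' where "A' x = A (\<alpha> (- g) x)" for x
  have "continuous_on UNIV (\<alpha> (- g))" using act unfolding group_action_homeo_def by blast
  then have cA': "continuous_on UNIV A'"
    unfolding A'_def by (rule continuous_on_compose2[OF cA]) auto
  have "continuous_on UNIV (\<alpha> g)" using act unfolding group_action_homeo_def by blast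
  then have "compact C" unfolding C_def
    by (rule compact_continuous_image[OF continuous_on_subset]) (use \<open>compact {x. \<delta> \<le> A x}\<close> in auto)
  moreover have "{x. \<delta> \<le> A' x} \<subseteq> C"
  proof
    fix x assume "x \<in> {x. \<delta> \<le> A' x}"
    then have "\<alpha> (- g) x \<in> {x. \<delta> \<le> A x}" unfolding A'_def by simp
    then show "x \<in> C" unfolding C_def using group_action_homeo_inverse(1)[OF act, of g x] by force
  qed
  moreover have "\<eta> < A x" if "x \<in> C" for x using that g unfolding C_def U_def by blast
  ultimately obtain s where s: "s \<in> C0" "\<forall>x. s x \<noteq> 0 \<longrightarrow> x \<in> C"
      "\<And>x. \<bar>(norm (s x))\<^sup>2 * A x - A' x\<bar> \<le> 2 * \<delta>"
    using exists_sandwich_approximation[OF cA cA' _ \<delta> \<eta>, of C] A_nonneg unfolding A'_def by blast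
  have "sandw s a s x - induced_action \<alpha> g a x = of_real ((norm (s x))\<^sup>2 * A x - A' x)" for x
    unfolding sandw_self induced_action_def A'_def by (simp add: a_eq)
  then have "supnorm (\<lambda>x. sandw s a s x - induced_action \<alpha> g a x) \<le> 2 * \<delta>"
    using s(3) by (intro supnorm_le) (simp only: norm_of_real)
  also have "\<dots> < \<epsilon>" using \<epsilon> by (simp add: \<delta>_def)
  finally have "supnorm (\<lambda>x. sandw s a s x - induced_action \<alpha> g a x) < \<epsilon>" .
  moreover have "\<forall>x. s x \<noteq> 0 \<longrightarrow> x \<in> V" using s(2) g unfolding C_def U_def by blast
  ultimately show ?thesis using s(1) by blast
qed

lemma exists_compression:
  fixes \<alpha> :: "'g::group_add \<Rightarrow> 'a::topological_space \<Rightarrow> 'a"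
  assumes act: "group_action_homeo \<alpha>"
    and minimal: "\<And>K U. compact K \<Longrightarrow> open U \<Longrightarrow> U \<noteq> {} \<Longrightarrow> \<exists>g. \<alpha> g ` K \<subseteq> U"
    and a: "a \<in> C0_pos" and \<epsilon>: "\<epsilon> > 0"
    and V: "open V" "p \<in> V" and p: "(\<forall>x. a x = 0) \<or> 0 < Re (a p)"
  shows "\<exists>s\<in>C0. \<exists>g. supnorm (\<lambda>x. sandw s a s x - induced_action \<alpha> g a x) < \<epsilon>
                   \<and> (\<forall>x. s x \<noteq> 0 \<longrightarrow> x \<in> V)"
proof (cases "\<forall>x. a x = 0")
  case True
  have "(\<lambda>x. 0) \<in> C0" unfolding C0_def by auto
  moreover have "supnorm (\<lambda>x. sandw (\<lambda>x. 0) a (\<lambda>x. 0) x - induced_action \<alpha> 0 a x) \<le> 0"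
    using True by (intro supnorm_le) (simp add: sandw_def induced_action_def)
  ultimately show ?thesis using \<epsilon> by (intro bexI[of _ "\<lambda>x. 0"] exI[of _ 0]) auto
next
  case False
  then show ?thesis using exists_compression_pos[OF act minimal a \<epsilon> V] p by blast
qed

lemma minimal_action_open_two_points:
  fixes \<alpha> :: "'g::group_add \<Rightarrow> 'a::topological_space \<Rightarrow> 'a" and x y :: 'a and W :: "'a set"
  assumes act: "group_action_homeo \<alpha>"
    and minimal: "\<And>K U. compact K \<Longrightarrow> open U \<Longrightarrow> U \<noteq> {} \<Longrightarrow> \<exists>g. \<alpha> g ` K \<subseteq> U"
    and "x \<noteq> y" and W: "open W" "W \<noteq> {}"
  shows "\<exists>u\<in>W. \<exists>v\<in>W. u \<noteq> v"
proof -
  obtain g where g: "\<alpha> g ` {x, y} \<subseteq> W" using minimal[OF _ W, of "{x, y}"] by auto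
  have "\<alpha> g x \<noteq> \<alpha> g y" using \<open>x \<noteq> y\<close> group_action_homeo_inverse(2)[OF act] by metis
  then show ?thesis using g by auto
qed

lemma C0_pos_separated_points:
  fixes a b :: "'a::t2_space \<Rightarrow> complex"
  assumes a: "a \<in> C0_pos" and b: "b \<in> C0_pos"
    and two_points: "\<And>W :: 'a set. open W \<Longrightarrow> W \<noteq> {} \<Longrightarrow> \<exists>u\<in>W. \<exists>v\<in>W. u \<noteq> v"
  obtains p q Va Vb where "open Va" "open Vb" "p \<in> Va" "q \<in> Vb" "Va \<inter> Vb = {}"
    "(\<forall>x. a x = 0) \<or> 0 < Re (a p)" "(\<forall>x. b x = 0) \<or> 0 < Re (b q)"
proof -
  obtain Wa where Wa: "open Wa" "Wa \<noteq> {}" "(\<forall>x. a x = 0) \<or> (\<forall>p\<in>Wa. 0 < Re (a p))"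
    using C0_pos_positive_set[OF a] by blast
  obtain Wb where Wb: "open Wb" "Wb \<noteq> {}" "(\<forall>x. b x = 0) \<or> (\<forall>q\<in>Wb. 0 < Re (b q))"
    using C0_pos_positive_set[OF b] by blast
  obtain q where q: "q \<in> Wb" using Wb(2) by blast
  obtain u v where "u \<in> Wa" "v \<in> Wa" "u \<noteq> v" using two_points[OF Wa(1,2)] by blast
  then obtain p where p: "p \<in> Wa" "p \<noteq> q" by blast
  obtain Va Vb where "open Va" "open Vb" "p \<in> Va" "q \<in> Vb" "Va \<inter> Vb = {}"
    using hausdorff[OF p(2)] by blast
  moreover have "(\<forall>x. a x = 0) \<or> 0 < Re (a p)" "(\<forall>x. b x = 0) \<or> 0 < Re (b q)"
    using Wa(3) Wb(3) p(1) q by auto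
  ultimately show ?thesis by (rule that)
qed

theorem mainTheorem15:
  fixes \<alpha> :: "'g::group_add \<Rightarrow> 'a::t2_space \<Rightarrow> 'a"
  assumes "group_action_homeo \<alpha>"
    and "locally_compact_space (euclidean :: 'a topology)"
    and "\<not> compact (UNIV :: 'a set)"
    and "\<exists>x y z :: 'a. x \<noteq> y \<and> y \<noteq> z \<and> x \<noteq> z"
    and "\<And>K U. compact K \<Longrightarrow> open U \<Longrightarrow> U \<noteq> {} \<Longrightarrow> \<exists>g. \<alpha> g ` K \<subseteq> U"
  shows "G_separating (induced_action \<alpha>)"
  unfolding G_separating_def
proof (intro ballI allI impI)
  fix a b c :: "'a \<Rightarrow> complex" and \<epsilon> :: real
  assume a: "a \<in> C0_pos" and b: "b \<in> C0_pos" and "c \<in> C0" and \<epsilon>: "\<epsilon> > 0"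
  obtain x y :: 'a where "x \<noteq> y" using assms(4) by blast
  then have two_points: "\<exists>u\<in>W. \<exists>v\<in>W. u \<noteq> v" if "open W" "W \<noteq> {}" for W :: "'a set"
    using minimal_action_open_two_points[OF assms(1,5) _ that] by blast
  obtain p q Va Vb where V: "open Va" "open Vb" "p \<in> Va" "q \<in> Vb" "Va \<inter> Vb = {}"
      and p: "(\<forall>x. a x = 0) \<or> 0 < Re (a p)" and q: "(\<forall>x. b x = 0) \<or> 0 < Re (b q)"
    by (rule C0_pos_separated_points[OF a b two_points])
  obtain s g where s: "s \<in> C0" "supnorm (\<lambda>x. sandw s a s x - induced_action \<alpha> g a x) < \<epsilon>"
      "\<forall>x. s x \<noteq> 0 \<longrightarrow> x \<in> Va"
    using exists_compression[OF assms(1,5) a \<epsilon> V(1,3) p] by blast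
  obtain t h where t: "t \<in> C0" "supnorm (\<lambda>x. sandw t b t x - induced_action \<alpha> h b x) < \<epsilon>"
      "\<forall>x. t x \<noteq> 0 \<longrightarrow> x \<in> Vb"
    using exists_compression[OF assms(1,5) b \<epsilon> V(2,4) q] by blast
  have "supnorm (sandw s c t) \<le> 0"
    using s(3) t(3) V(5) by (intro supnorm_le) (auto simp: sandw_def)
  then show "\<exists>s\<in>C0. \<exists>t\<in>C0. \<exists>g h.
          supnorm (\<lambda>x. sandw s a s x - induced_action \<alpha> g a x) < \<epsilon> \<and>
          supnorm (\<lambda>x. sandw t b t x - induced_action \<alpha> h b x) < \<epsilon> \<and>
          supnorm (sandw s c t) < \<epsilon>"
    using s t \<epsilon> by fastforce
qed

end
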